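(* Let $X \in \Lambda^2_{14} = \mathfrak{g}_2$ with $\operatorname{rank} X \leq 4$. Then $\ker X$ contains an associative $3$-plane.
   Context: Equip $\mathbb{R}^7$ with its standard inner product and basis. Let $\varphi = e_{123} - e_{167} - e_{527} - e_{563} - e_{415} - e_{426} - e_{437}$ ($e_{ijk} = e_i\wedge e_j \wedge e_k$) and define the cross product by $\langle u\times v, w\rangle = \varphi(u,v,w)$. A skew bilinear form $X$ is identified with the skew-adjoint operator $X$ given by $X(u,v) = \langle X(u),v\rangle$ (rank and kernel refer to this operator). $\Lambda^2_{14} = \mathfrak{g}_2$ is the set of skew bilinear forms $X$ with $X(v\times w) = X(v)\times w + v \times X(w)$ for all $v,w$. A $3$-dimensional subspace is associative if it is closed under $\times$. *)

theory Defs
  imports "HOL-Analysis.Analysis"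
begin

(* Basis indices 1..7 of R^7 are the elements of type 7 given by of_nat 1, ..., of_nat 7
   (of_nat 7 = 0 in the type 7; the map {1..7} -> 7 is a bijection). *)
definition idx :: "nat \<Rightarrow> 7" where "idx i = of_nat i"

(* e_{ijk} = e_i \<wedge> e_j \<wedge> e_k evaluated on (u,v,w): the 3x3 determinant *)
definition wedge3 :: "nat \<Rightarrow> nat \<Rightarrow> nat \<Rightarrow> real^7 \<Rightarrow> real^7 \<Rightarrow> real^7 \<Rightarrow> real" where
  "wedge3 i j k u v w =
     u$idx i * (v$idx j * w$idx k - v$idx k * w$idx j)
   - u$idx j * (v$idx i * w$idx k - v$idx k * w$idx i)
   + u$idx k * (v$idx i * w$idx j - v$idx j * w$idx i)"

definition phi :: "real^7 \<Rightarrow> real^7 \<Rightarrow> real^7 \<Rightarrow> real" where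
  "phi u v w = wedge3 1 2 3 u v w - wedge3 1 6 7 u v w - wedge3 5 2 7 u v w
     - wedge3 5 6 3 u v w - wedge3 4 1 5 u v w - wedge3 4 2 6 u v w - wedge3 4 3 7 u v w"

(* cross product: <u x v, w> = phi(u,v,w) *)
definition cross7 :: "real^7 \<Rightarrow> real^7 \<Rightarrow> real^7" where
  "cross7 u v = (\<chi> k. phi u v (axis k 1))"

(* A skew bilinear form X, identified with the skew-adjoint operator given by a matrix *)
definition skew :: "real^7^7 \<Rightarrow> bool" where
  "skew A \<longleftrightarrow> transpose A = - A"

definition in_g2 :: "real^7^7 \<Rightarrow> bool" where
  "in_g2 A \<longleftrightarrow> skew A \<and>
     (\<forall>v w. A *v cross7 v w = cross7 (A *v v) w + cross7 v (A *v w))"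

definition associative3 :: "(real^7) set \<Rightarrow> bool" where
  "associative3 V \<longleftrightarrow> subspace V \<and> dim V = 3 \<and> (\<forall>u\<in>V. \<forall>v\<in>V. cross7 u v \<in> V)"

end

theory Submission
  imports Defs
begin

(* An element of g2 is a derivation of the cross product, so its kernel is closed under the
   cross product, and by rank-nullity the kernel has dimension at least 3.  For orthogonal
   nonzero u, v in the kernel, u \<times> (u \<times> v) = -|u|^2 v and v \<times> (u \<times> v) = |v|^2 u,
   so u, v, u \<times> v span an associative 3-plane inside the kernel. *)

lemma exhaust_7:
  fixes x :: 7
  shows "x = 0 \<or> x = 1 \<or> x = 2 \<or> x = 3 \<or> x = 4 \<or> x = 5 \<or> x = 6"
proof (induct x)
  case (of_int z)
  then have "z = 0 \<or> z = 1 \<or> z = 2 \<or> z = 3 \<or> z = 4 \<or> z = 5 \<or> z = 6" by fastforce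
  then show ?case by auto
qed

lemma forall_7: "(\<forall>i::7. P i) \<longleftrightarrow> P 0 \<and> P 1 \<and> P 2 \<and> P 3 \<and> P 4 \<and> P 5 \<and> P 6"
  by (metis exhaust_7)

lemma UNIV_7: "UNIV = {0, 1, 2, 3, 4, 5, 6::7}"
  using exhaust_7 by auto

lemma sum_7: "sum f (UNIV::7 set) = f 0 + f 1 + f 2 + f 3 + f 4 + f 5 + f 6"
  unfolding UNIV_7 by (simp add: ac_simps)

lemma idx_values:
  "idx 1 = 1" "idx 2 = 2" "idx 3 = 3" "idx 4 = 4" "idx 5 = 5" "idx 6 = 6" "idx 7 = 0"
  by (simp_all add: idx_def)

lemma cross7_component:
  "cross7 u v $ 0 = (u$2 * v$5 - u$5 * v$2) + (u$3 * v$4 - u$4 * v$3) - (u$1 * v$6 - u$6 * v$1)"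
  "cross7 u v $ 1 = (u$0 * v$6 - u$6 * v$0) + (u$2 * v$3 - u$3 * v$2) + (u$4 * v$5 - u$5 * v$4)"
  "cross7 u v $ 2 = (u$4 * v$6 - u$6 * v$4) - (u$0 * v$5 - u$5 * v$0) - (u$1 * v$3 - u$3 * v$1)"
  "cross7 u v $ 3 = (u$1 * v$2 - u$2 * v$1) - (u$0 * v$4 - u$4 * v$0) - (u$5 * v$6 - u$6 * v$5)"
  "cross7 u v $ 4 = (u$0 * v$3 - u$3 * v$0) - (u$1 * v$5 - u$5 * v$1) - (u$2 * v$6 - u$6 * v$2)"
  "cross7 u v $ 5 = (u$0 * v$2 - u$2 * v$0) + (u$1 * v$4 - u$4 * v$1) + (u$3 * v$6 - u$6 * v$3)"
  "cross7 u v $ 6 = (u$2 * v$4 - u$4 * v$2) - (u$0 * v$1 - u$1 * v$0) - (u$3 * v$5 - u$5 * v$3)"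
  unfolding cross7_def phi_def wedge3_def idx_values by (simp_all add: axis_def algebra_simps)

lemmas cross7_simps = vec_eq_iff forall_7 cross7_component inner_vec_def sum_7 algebra_simps

lemma bilinear_cross7: "bilinear cross7"
  by (simp add: bilinear_def linear_iff cross7_simps)

lemma cross7_antisym: "cross7 v u = - cross7 u v"
  by (simp add: cross7_simps)

lemma cross7_self [simp]: "cross7 u u = 0"
  by (simp add: cross7_simps)

lemma inner_cross7_left [simp]: "cross7 u v \<bullet> u = 0"
  by (simp add: cross7_simps)

lemma inner_cross7_right [simp]: "cross7 u v \<bullet> v = 0"
  by (simp add: cross7_simps)

lemma cross7_cross7: "cross7 u (cross7 u v) = (u \<bullet> v) *\<^sub>R u - (u \<bullet> u) *\<^sub>R v"
  by (simp add: cross7_simps)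

lemma bilinear_span_closed:
  assumes h: "bilinear h" and gen: "\<And>a b. a \<in> S \<Longrightarrow> b \<in> S \<Longrightarrow> h a b \<in> span S"
    and x: "x \<in> span S" and y: "y \<in> span S"
  shows "h x y \<in> span S"
proof -
  have "span S \<subseteq> h a -` span S" if "a \<in> S" for a
    using h gen that
    by (intro span_minimal real_vector.linear_subspace_vimage) (auto simp: bilinear_def)
  then have "S \<subseteq> (\<lambda>a. h a y) -` span S"
    using y by blast
  moreover have "subspace ((\<lambda>a. h a y) -` span S)"
    using h by (intro real_vector.linear_subspace_vimage) (auto simp: bilinear_def)
  ultimately show ?thesis
    using x span_minimal by blast
qed

lemma cross7_nonzero:
  assumes "u \<noteq> 0" "v \<noteq> 0" "u \<bullet> v = 0"
  shows "cross7 u v \<noteq> 0"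
proof
  assume "cross7 u v = 0"
  then have "(u \<bullet> u) *\<^sub>R v = 0"
    using cross7_cross7[of u v] assms(3) by (simp add: bilinear_rzero[OF bilinear_cross7])
  with assms(1,2) show False
    by simp
qed

lemma associative3_span_cross7:
  assumes u: "u \<noteq> 0" and v: "v \<noteq> 0" and uv: "u \<bullet> v = 0"
  shows "associative3 (span {u, v, cross7 u v})"
proof -
  define w where "w = cross7 u v"
  have w: "w \<noteq> 0"
    unfolding w_def using u v uv by (rule cross7_nonzero)
  have uw: "u \<bullet> w = 0" and vw: "v \<bullet> w = 0"
    unfolding w_def by (simp_all add: inner_commute[of _ "cross7 u v"])
  have "u \<noteq> v" "u \<noteq> w" "v \<noteq> w"
    using u v uv uw vw by auto
  then have card: "card {u, v, w} = 3"
    by simp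
  have "pairwise orthogonal {u, v, w}"
    using uv uw vw by (auto simp: pairwise_def orthogonal_def inner_commute)
  then have "independent {u, v, w}"
    using u v w by (intro pairwise_orthogonal_independent) auto
  with card have dim: "dim (span {u, v, w}) = 3"
    by (simp add: dim_eq_card_independent)
  have "cross7 u w = - (u \<bullet> u) *\<^sub>R v"
    by (simp add: w_def cross7_cross7 uv)
  moreover have "cross7 v w = (v \<bullet> v) *\<^sub>R u"
    using cross7_cross7[of v u] by (simp add: w_def cross7_antisym[of u v] inner_commute uv
        bilinear_rneg[OF bilinear_cross7])
  ultimately have "cross7 u v \<in> span {u, v, w}" "cross7 u w \<in> span {u, v, w}"
    "cross7 v w \<in> span {u, v, w}"
    by (simp_all add: w_def span_base span_scale span_neg)
  then have "cross7 a b \<in> span {u, v, w}" if "a \<in> {u, v, w}" "b \<in> {u, v, w}" for a b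
    using that cross7_antisym span_neg by (metis cross7_self empty_iff insert_iff span_zero)
  then have "\<forall>x\<in>span {u, v, w}. \<forall>y\<in>span {u, v, w}. cross7 x y \<in> span {u, v, w}"
    using bilinear_span_closed[OF bilinear_cross7] by blast
  with dim show ?thesis
    unfolding associative3_def w_def[symmetric] by (simp add: subspace_span)
qed

lemma associative3_in_cross7_closed_subspace:
  assumes W: "subspace W" and dim: "2 \<le> dim W"
    and closed: "\<And>u v. u \<in> W \<Longrightarrow> v \<in> W \<Longrightarrow> cross7 u v \<in> W"
  shows "\<exists>V. associative3 V \<and> V \<subseteq> W"
proof -
  obtain B where B: "0 \<notin> B" "B \<subseteq> W" "pairwise orthogonal B" "card B = dim W"
    using orthogonal_basis_subspace[OF W] by metis
  with dim have "\<not> card B \<le> Suc 0"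
    by simp
  moreover from this have "finite B"
    by (metis card.infinite le0)
  ultimately obtain u v where uv: "u \<in> B" "v \<in> B" "u \<noteq> v"
    by (meson card_le_Suc0_iff_eq)
  with B have "u \<noteq> 0" "v \<noteq> 0" "u \<bullet> v = 0"
    by (auto simp: pairwise_def orthogonal_def)
  then have "associative3 (span {u, v, cross7 u v})"
    by (rule associative3_span_cross7)
  moreover have "{u, v, cross7 u v} \<subseteq> W"
    using uv B(2) closed by blast
  then have "span {u, v, cross7 u v} \<subseteq> W"
    using W by (rule span_minimal)
  ultimately show ?thesis
    by blast
qed

(* The null space of A is the orthogonal complement of the range of its transpose. *)
lemma dim_null_space_add_rank:
  fixes A :: "real^'n^'m"
  shows "dim {x. A *v x = 0} + rank A = CARD('n)"
proof -
  let ?R = "range (\<lambda>z. transpose A *v z)"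
  have "{x. A *v x = 0} = {y \<in> UNIV. \<forall>x \<in> ?R. orthogonal x y}"
  proof (intro Collect_cong iffI)
    fix y
    assume "A *v y = 0"
    then show "y \<in> UNIV \<and> (\<forall>x \<in> ?R. orthogonal x y)"
      by (auto simp: orthogonal_def dot_lmul_matrix)
  next
    fix y
    assume "y \<in> UNIV \<and> (\<forall>x \<in> ?R. orthogonal x y)"
    then have "(A *v y) \<bullet> (A *v y) = 0"
      by (simp add: orthogonal_def dot_lmul_matrix)
    then show "A *v y = 0"
      by simp
  qed
  moreover have "dim {y \<in> UNIV. \<forall>x \<in> ?R. orthogonal x y} + dim ?R = dim (UNIV :: (real^'n) set)"
    by (intro dim_subspace_orthogonal_to_vectors subspace_UNIV
        real_vector.linear_subspace_image matrix_vector_mul_linear) simp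
  moreover have "dim ?R = rank A"
    by (metis rank_dim_range rank_transpose)
  ultimately show ?thesis
    by simp
qed

lemma g2_kernel_cross7_closed:
  assumes "in_g2 X" "X *v u = 0" "X *v v = 0"
  shows "X *v cross7 u v = 0"
proof -
  have "X *v cross7 u v = cross7 (X *v u) v + cross7 u (X *v v)"
    using assms(1) by (simp add: in_g2_def)
  also have "\<dots> = 0"
    using assms(2,3)
    by (simp add: bilinear_lzero[OF bilinear_cross7] bilinear_rzero[OF bilinear_cross7])
  finally show ?thesis .
qed

theorem proposition3p1:
  fixes X :: "real^7^7"
  assumes "in_g2 X" and "rank X \<le> 4"
  shows "\<exists>V. associative3 V \<and> V \<subseteq> {x. X *v x = 0}"
proof (rule associative3_in_cross7_closed_subspace)
  show "subspace {x. X *v x = 0}"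
    by (rule real_vector.linear_subspace_kernel[OF matrix_vector_mul_linear])
  show "2 \<le> dim {x. X *v x = 0}"
    using dim_null_space_add_rank[of X] assms(2) by simp
  show "cross7 u v \<in> {x. X *v x = 0}" if "u \<in> {x. X *v x = 0}" "v \<in> {x. X *v x = 0}" for u v
    using g2_kernel_cross7_closed[OF assms(1)] that by simp
qed

end
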